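(* Let $R$ be one of the chain rings $\mathbb{G}_4=\mathbb{Z}_4[X]/(X^2+X+1)$, $\mathbb{S}_4=\mathbb{F}_4[X]/(X^2)$, $\mathbb{T}_4=\mathbb{F}_4[X;a\mapsto a^2]/(X^2)$. Then there exists a projective $(201,13)$-arc in $\mathrm{PHG}(2,R)$.
   Context: $\mathbb{F}_4[X;a\mapsto a^2]$ denotes the skew polynomial ring with commutation rule $Xa=a^2X$. For a finite chain ring $R$ of length $2$ with residue field $\mathbb{F}_q$, the projective Hjelmslev plane $\mathrm{PHG}(2,R)$ is the incidence structure whose points are the free rank-$1$ submodules of the right module $R_R^3$, whose lines are the free rank-$2$ submodules of $R_R^3$, with incidence given by inclusion. A projective $(k,n)$-arc is a set of $k$ points meeting every line in at most $n$ points. *)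

theory Defs
  imports "HOL-Algebra.Ring"
begin

type_synonym 'a vec3 = "'a \<times> 'a \<times> 'a"

definition vec3_carrier :: "('a, 'm) ring_scheme \<Rightarrow> 'a vec3 set" where
  "vec3_carrier R = carrier R \<times> carrier R \<times> carrier R"

definition vzero :: "('a, 'm) ring_scheme \<Rightarrow> 'a vec3" where
  "vzero R = (\<zero>\<^bsub>R\<^esub>, \<zero>\<^bsub>R\<^esub>, \<zero>\<^bsub>R\<^esub>)"

definition vadd :: "('a, 'm) ring_scheme \<Rightarrow> 'a vec3 \<Rightarrow> 'a vec3 \<Rightarrow> 'a vec3" where
  "vadd R x y = (case x of (x1, x2, x3) \<Rightarrow> case y of (y1, y2, y3) \<Rightarrow>
      (x1 \<oplus>\<^bsub>R\<^esub> y1, x2 \<oplus>\<^bsub>R\<^esub> y2, x3 \<oplus>\<^bsub>R\<^esub> y3))"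

definition rsmult :: "('a, 'm) ring_scheme \<Rightarrow> 'a vec3 \<Rightarrow> 'a \<Rightarrow> 'a vec3" where
  "rsmult R x r = (case x of (x1, x2, x3) \<Rightarrow>
      (x1 \<otimes>\<^bsub>R\<^esub> r, x2 \<otimes>\<^bsub>R\<^esub> r, x3 \<otimes>\<^bsub>R\<^esub> r))"

definition free_rank1_submodule :: "('a, 'm) ring_scheme \<Rightarrow> 'a vec3 set \<Rightarrow> bool" where
  "free_rank1_submodule R S \<longleftrightarrow>
     (\<exists>x \<in> vec3_carrier R.
        (\<forall>r \<in> carrier R. rsmult R x r = vzero R \<longrightarrow> r = \<zero>\<^bsub>R\<^esub>) \<and>
        S = {rsmult R x r | r. r \<in> carrier R})"

definition free_rank2_submodule :: "('a, 'm) ring_scheme \<Rightarrow> 'a vec3 set \<Rightarrow> bool" where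
  "free_rank2_submodule R S \<longleftrightarrow>
     (\<exists>x \<in> vec3_carrier R. \<exists>y \<in> vec3_carrier R.
        (\<forall>r \<in> carrier R. \<forall>s \<in> carrier R.
            vadd R (rsmult R x r) (rsmult R y s) = vzero R \<longrightarrow> r = \<zero>\<^bsub>R\<^esub> \<and> s = \<zero>\<^bsub>R\<^esub>) \<and>
        S = {vadd R (rsmult R x r) (rsmult R y s) | r s. r \<in> carrier R \<and> s \<in> carrier R})"

definition PHG_points :: "('a, 'm) ring_scheme \<Rightarrow> 'a vec3 set set" where
  "PHG_points R = {S. free_rank1_submodule R S}"

definition PHG_lines :: "('a, 'm) ring_scheme \<Rightarrow> 'a vec3 set set" where
  "PHG_lines R = {S. free_rank2_submodule R S}"

definition projective_arc :: "('a, 'm) ring_scheme \<Rightarrow> 'a vec3 set set \<Rightarrow> nat \<Rightarrow> nat \<Rightarrow> bool" where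
  "projective_arc R A k n \<longleftrightarrow>
     A \<subseteq> PHG_points R \<and> finite A \<and> card A = k \<and>
     (\<forall>L \<in> PHG_lines R. card {P \<in> A. P \<subseteq> L} \<le> n)"

text \<open>Elements 0,1,2,3 encode 0, 1, w, w+1 = w^2 (binary coordinates over F_2);
  addition is bitwise xor, multiplication via discrete logarithm (a = w^(a-1) for a \<noteq> 0).\<close>
definition f4add :: "nat \<Rightarrow> nat \<Rightarrow> nat" where
  "f4add a b = xor a b"

definition f4mul :: "nat \<Rightarrow> nat \<Rightarrow> nat" where
  "f4mul a b = (if a = 0 \<or> b = 0 then 0 else ((a - 1) + (b - 1)) mod 3 + 1)"

text \<open>G_4 = Z_4[X]/(X^2+X+1): (a,b) = a + b w, a,b in Z_4, w^2 = -w - 1.\<close>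
definition G4 :: "(nat \<times> nat) ring" where
  "G4 = \<lparr> carrier = {0..<4} \<times> {0..<4},
          mult = (\<lambda>(a,b) (c,d). ((a*c + 3*b*d) mod 4, (a*d + b*c + 3*b*d) mod 4)),
          one = (1, 0),
          zero = (0, 0),
          add = (\<lambda>(a,b) (c,d). ((a + c) mod 4, (b + d) mod 4)) \<rparr>"

text \<open>S_4 = F_4[X]/(X^2): (a,b) = a + b X.\<close>
definition S4 :: "(nat \<times> nat) ring" where
  "S4 = \<lparr> carrier = {0..<4} \<times> {0..<4},
          mult = (\<lambda>(a,b) (c,d). (f4mul a c, f4add (f4mul a d) (f4mul b c))),
          one = (1, 0),
          zero = (0, 0),
          add = (\<lambda>(a,b) (c,d). (f4add a c, f4add b d)) \<rparr>"

text \<open>T_4 = F_4[X; a \<mapsto> a^2]/(X^2), X a = a^2 X: (a + bX)(c + dX) = ac + (ad + b c^2) X.\<close>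
definition T4 :: "(nat \<times> nat) ring" where
  "T4 = \<lparr> carrier = {0..<4} \<times> {0..<4},
          mult = (\<lambda>(a,b) (c,d). (f4mul a c, f4add (f4mul a d) (f4mul b (f4mul c c)))),
          one = (1, 0),
          zero = (0, 0),
          add = (\<lambda>(a,b) (c,d). (f4add a c, f4add b d)) \<rparr>"

end

theory Submission
  imports Defs "HOL-Library.Product_Lexorder"
begin

(* The arcs are explicit lists of 201 points found by computer search, so the proof is a
   verification. Each of the three rings is local, and a generator t of its maximal ideal is
   annihilated by every nonunit. Over such a ring, Gaussian elimination on a basis of a free
   rank-2 submodule turns it into the identity at two coordinates i, j; hence every line of
   PHG(2,R) is contained in a set {v. v_k = a v_i + b v_j} with {i, j, k} = {0, 1, 2}. Solving for
   a unit coefficient, one may take (i, j) = (0, 1), or (0, 2) with b a nonunit, or (1, 2) with a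
   and b nonunits: 336 equations in all. A point lies on the line only if its generators satisfy
   the equation, and every point has exactly one generator whose first unit coordinate is 1, so
   distinct such generators span distinct points. The arc property thus reduces to finitely many
   checks: the 201 generators are normalized and distinct, and each of the 336 equations holds for
   at most 13 of them. *)

section \<open>Coordinates and submodules of \<open>R\<^sup>3\<close>\<close>

definition coord :: "'a vec3 \<Rightarrow> nat \<Rightarrow> 'a" where
  "coord v i = (if i = 0 then fst v else if i = 1 then fst (snd v) else snd (snd v))"

lemma coord_simps [simp]:
  "coord (a, b, c) 0 = a" "coord (a, b, c) 1 = b" "coord (a, b, c) (Suc 0) = b" "coord (a, b, c) 2 = c"
  by (simp_all add: coord_def)

lemma vec3_eqI: "coord x 0 = coord y 0 \<Longrightarrow> coord x 1 = coord y 1 \<Longrightarrow> coord x 2 = coord y 2 \<Longrightarrow> x = y"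
  by (cases x; cases y) (simp add: coord_def)

lemma coord_vadd [simp]: "coord (vadd R x y) l = coord x l \<oplus>\<^bsub>R\<^esub> coord y l"
  by (cases x; cases y) (simp add: coord_def vadd_def)

lemma coord_rsmult [simp]: "coord (rsmult R x r) l = coord x l \<otimes>\<^bsub>R\<^esub> r"
  by (cases x) (simp add: coord_def rsmult_def)

lemma coord_vzero [simp]: "coord (vzero R) l = \<zero>\<^bsub>R\<^esub>"
  by (simp add: coord_def vzero_def)

lemma vec3_carrier_iff:
  "x \<in> vec3_carrier R \<longleftrightarrow> coord x 0 \<in> carrier R \<and> coord x 1 \<in> carrier R \<and> coord x 2 \<in> carrier R"
  by (cases x) (simp add: vec3_carrier_def)

lemma coord_closed [simp]: "x \<in> vec3_carrier R \<Longrightarrow> coord x l \<in> carrier R"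
  by (cases x) (auto simp: vec3_carrier_def coord_def)

definition rspan :: "('a, 'm) ring_scheme \<Rightarrow> 'a vec3 \<Rightarrow> 'a vec3 set" where
  "rspan R p = {rsmult R p r | r. r \<in> carrier R}"

definition rspan2 :: "('a, 'm) ring_scheme \<Rightarrow> 'a vec3 \<Rightarrow> 'a vec3 \<Rightarrow> 'a vec3 set" where
  "rspan2 R x y = {vadd R (rsmult R x r) (rsmult R y s) | r s. r \<in> carrier R \<and> s \<in> carrier R}"

definition free_vector :: "('a, 'm) ring_scheme \<Rightarrow> 'a vec3 \<Rightarrow> bool" where
  "free_vector R x \<longleftrightarrow> (\<forall>r \<in> carrier R. rsmult R x r = vzero R \<longrightarrow> r = \<zero>\<^bsub>R\<^esub>)"

definition free_pair :: "('a, 'm) ring_scheme \<Rightarrow> 'a vec3 \<Rightarrow> 'a vec3 \<Rightarrow> bool" where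
  "free_pair R x y \<longleftrightarrow> (\<forall>r \<in> carrier R. \<forall>s \<in> carrier R.
     vadd R (rsmult R x r) (rsmult R y s) = vzero R \<longrightarrow> r = \<zero>\<^bsub>R\<^esub> \<and> s = \<zero>\<^bsub>R\<^esub>)"

lemma free_rank1_submodule_iff:
  "free_rank1_submodule R S \<longleftrightarrow> (\<exists>x \<in> vec3_carrier R. free_vector R x \<and> S = rspan R x)"
  by (simp add: free_rank1_submodule_def free_vector_def rspan_def)

lemma free_rank2_submodule_iff:
  "free_rank2_submodule R S \<longleftrightarrow>
     (\<exists>x \<in> vec3_carrier R. \<exists>y \<in> vec3_carrier R. free_pair R x y \<and> S = rspan2 R x y)"
  by (simp add: free_rank2_submodule_def free_pair_def rspan2_def)

definition vsubmodule :: "('a, 'm) ring_scheme \<Rightarrow> 'a vec3 set \<Rightarrow> bool" where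
  "vsubmodule R S \<longleftrightarrow> S \<subseteq> vec3_carrier R \<and>
     (\<forall>v \<in> S. \<forall>w \<in> S. vadd R v w \<in> S) \<and> (\<forall>v \<in> S. \<forall>r \<in> carrier R. rsmult R v r \<in> S)"

lemma rspan2_least:
  assumes "vsubmodule R S" "x \<in> S" "y \<in> S"
  shows "rspan2 R x y \<subseteq> S"
  using assms unfolding vsubmodule_def rspan2_def by blast

text \<open>The coefficients act on the left, so that this is a submodule of the right module \<open>R\<^sup>3\<close>.\<close>
definition coord_hyperplane ::
    "('a, 'm) ring_scheme \<Rightarrow> nat \<Rightarrow> nat \<Rightarrow> nat \<Rightarrow> 'a \<Rightarrow> 'a \<Rightarrow> 'a vec3 set" where
  "coord_hyperplane R i j k a b =
     {v \<in> vec3_carrier R. coord v k = a \<otimes>\<^bsub>R\<^esub> coord v i \<oplus>\<^bsub>R\<^esub> b \<otimes>\<^bsub>R\<^esub> coord v j}"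

context ring
begin

lemma vadd_closed [simp]: "x \<in> vec3_carrier R \<Longrightarrow> y \<in> vec3_carrier R \<Longrightarrow> vadd R x y \<in> vec3_carrier R"
  unfolding vec3_carrier_iff[of "vadd R x y"] by simp

lemma rsmult_closed [simp]: "x \<in> vec3_carrier R \<Longrightarrow> r \<in> carrier R \<Longrightarrow> rsmult R x r \<in> vec3_carrier R"
  unfolding vec3_carrier_iff[of "rsmult R x r"] by simp

lemma rsmult_one [simp]: "x \<in> vec3_carrier R \<Longrightarrow> rsmult R x \<one> = x"
  by (rule vec3_eqI) simp_all

lemma rspan_self: "x \<in> vec3_carrier R \<Longrightarrow> x \<in> rspan R x"
  unfolding rspan_def by (rule CollectI, rule exI[of _ \<one>]) simp

lemma vsubmodule_rspan2:
  assumes "x \<in> vec3_carrier R" "y \<in> vec3_carrier R"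
  shows "vsubmodule R (rspan2 R x y)"
  unfolding vsubmodule_def
proof (intro conjI ballI)
  show "rspan2 R x y \<subseteq> vec3_carrier R"
    using assms by (auto simp: rspan2_def)
next
  fix v w assume "v \<in> rspan2 R x y" "w \<in> rspan2 R x y"
  then obtain r s r' s' where rs: "r \<in> carrier R" "s \<in> carrier R" "r' \<in> carrier R" "s' \<in> carrier R"
    and v: "v = vadd R (rsmult R x r) (rsmult R y s)" and w: "w = vadd R (rsmult R x r') (rsmult R y s')"
    by (auto simp: rspan2_def)
  have "vadd R v w = vadd R (rsmult R x (r \<oplus> r')) (rsmult R y (s \<oplus> s'))"
    unfolding v w by (rule vec3_eqI) (simp_all add: assms rs r_distr a_ac)
  then show "vadd R v w \<in> rspan2 R x y"
    using rs by (auto simp: rspan2_def)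
next
  fix v t assume "v \<in> rspan2 R x y" and t: "t \<in> carrier R"
  then obtain r s where rs: "r \<in> carrier R" "s \<in> carrier R"
    and v: "v = vadd R (rsmult R x r) (rsmult R y s)"
    by (auto simp: rspan2_def)
  have "rsmult R v t = vadd R (rsmult R x (r \<otimes> t)) (rsmult R y (s \<otimes> t))"
    unfolding v by (rule vec3_eqI) (simp_all add: assms rs t l_distr m_assoc)
  then show "rsmult R v t \<in> rspan2 R x y"
    using rs t by (auto simp: rspan2_def)
qed

lemma vsubmodule_coord_hyperplane:
  assumes a: "a \<in> carrier R" and b: "b \<in> carrier R"
  shows "vsubmodule R (coord_hyperplane R i j k a b)"
  unfolding vsubmodule_def
proof (intro conjI ballI)
  fix v w assume "v \<in> coord_hyperplane R i j k a b" "w \<in> coord_hyperplane R i j k a b"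
  then have v: "v \<in> vec3_carrier R" "coord v k = a \<otimes> coord v i \<oplus> b \<otimes> coord v j"
    and w: "w \<in> vec3_carrier R" "coord w k = a \<otimes> coord w i \<oplus> b \<otimes> coord w j"
    by (auto simp: coord_hyperplane_def)
  show "vadd R v w \<in> coord_hyperplane R i j k a b"
    using v w a b by (simp add: coord_hyperplane_def r_distr a_ac)
next
  fix v r assume "v \<in> coord_hyperplane R i j k a b" and r: "r \<in> carrier R"
  then have v: "v \<in> vec3_carrier R" "coord v k = a \<otimes> coord v i \<oplus> b \<otimes> coord v j"
    by (auto simp: coord_hyperplane_def)
  show "rsmult R v r \<in> coord_hyperplane R i j k a b"
    using v a b r by (simp add: coord_hyperplane_def l_distr m_assoc)
qed (auto simp: coord_hyperplane_def)

lemma coord_hyperplane_swap: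
  "a \<in> carrier R \<Longrightarrow> b \<in> carrier R \<Longrightarrow> coord_hyperplane R i j k a b = coord_hyperplane R j i k b a"
  unfolding coord_hyperplane_def by (auto simp: a_comm)

lemma eq_add_mult_solve:
  assumes "x \<in> carrier R" "y \<in> carrier R" "z \<in> carrier R" "a \<in> carrier R" "b \<in> Units R"
  shows "z = a \<otimes> x \<oplus> b \<otimes> y \<longleftrightarrow> y = \<ominus> (inv b \<otimes> a) \<otimes> x \<oplus> inv b \<otimes> z"
proof
  assume "z = a \<otimes> x \<oplus> b \<otimes> y"
  then show "y = \<ominus> (inv b \<otimes> a) \<otimes> x \<oplus> inv b \<otimes> z"
    using assms by (simp add: r_distr l_minus m_assoc[symmetric] a_assoc[symmetric] Units_closed l_neg)
next
  assume "y = \<ominus> (inv b \<otimes> a) \<otimes> x \<oplus> inv b \<otimes> z"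
  then show "z = a \<otimes> x \<oplus> b \<otimes> y"
    using assms by (simp add: r_distr l_minus r_minus m_assoc[symmetric] a_assoc[symmetric] Units_closed r_neg)
qed

lemma coord_hyperplane_solve:
  assumes "a \<in> carrier R" "b \<in> Units R"
  shows "coord_hyperplane R i j k a b = coord_hyperplane R i k j (\<ominus> (inv b \<otimes> a)) (inv b)"
proof -
  have "coord v k = a \<otimes> coord v i \<oplus> b \<otimes> coord v j \<longleftrightarrow>
      coord v j = \<ominus> (inv b \<otimes> a) \<otimes> coord v i \<oplus> inv b \<otimes> coord v k" if "v \<in> vec3_carrier R" for v
    using that assms by (intro eq_add_mult_solve) simp_all
  then show ?thesis
    unfolding coord_hyperplane_def by blast
qed

lemma coord_hyperplane_120_solve_right:
  assumes "a \<in> carrier R" "b \<in> Units R"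
  shows "coord_hyperplane R 1 2 0 a b = coord_hyperplane R 0 1 2 (inv b) (\<ominus> (inv b \<otimes> a))"
proof -
  have "coord_hyperplane R 1 2 0 a b = coord_hyperplane R 1 0 2 (\<ominus> (inv b \<otimes> a)) (inv b)"
    using assms by (rule coord_hyperplane_solve)
  also have "\<dots> = coord_hyperplane R 0 1 2 (inv b) (\<ominus> (inv b \<otimes> a))"
    using assms by (intro coord_hyperplane_swap) simp_all
  finally show ?thesis .
qed

lemma coord_hyperplane_120_solve_left:
  assumes "a \<in> Units R" "b \<in> carrier R"
  shows "coord_hyperplane R 1 2 0 a b = coord_hyperplane R 0 2 1 (inv a) (\<ominus> (inv a \<otimes> b))"
proof -
  have "coord_hyperplane R 1 2 0 a b = coord_hyperplane R 2 1 0 b a"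
    using assms by (intro coord_hyperplane_swap) (simp_all add: Units_closed)
  also have "\<dots> = coord_hyperplane R 2 0 1 (\<ominus> (inv a \<otimes> b)) (inv a)"
    using assms by (intro coord_hyperplane_solve)
  also have "\<dots> = coord_hyperplane R 0 2 1 (inv a) (\<ominus> (inv a \<otimes> b))"
    using assms by (intro coord_hyperplane_swap) simp_all
  finally show ?thesis .
qed

lemma rspan2_subset_coord_hyperplane:
  assumes "p \<in> vec3_carrier R" "q \<in> vec3_carrier R"
    and "coord p i = \<one>" "coord p j = \<zero>" "coord q i = \<zero>" "coord q j = \<one>"
  shows "rspan2 R p q \<subseteq> coord_hyperplane R i j k (coord p k) (coord q k)"
  using assms by (intro rspan2_least vsubmodule_coord_hyperplane) (auto simp: coord_hyperplane_def)

lemma free_vector_if_free_pair: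
  assumes "y \<in> vec3_carrier R" "free_pair R x y"
  shows "free_vector R x"
  unfolding free_vector_def
proof (intro ballI impI)
  fix r assume r: "r \<in> carrier R" and "rsmult R x r = vzero R"
  then have "coord x l \<otimes> r = \<zero>" for l
    by (metis coord_rsmult coord_vzero)
  then have "vadd R (rsmult R x r) (rsmult R y \<zero>) = vzero R"
    using assms(1) by (intro vec3_eqI) simp_all
  then show "r = \<zero>"
    using assms(2) r by (auto simp: free_pair_def)
qed

lemma free_vector_vadd_rsmult:
  assumes "x \<in> vec3_carrier R" "y \<in> vec3_carrier R" "free_pair R x y" "c \<in> carrier R"
  shows "free_vector R (vadd R y (rsmult R x c))"
  unfolding free_vector_def
proof (intro ballI impI)
  fix s assume s: "s \<in> carrier R" and "rsmult R (vadd R y (rsmult R x c)) s = vzero R"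
  moreover have "rsmult R (vadd R y (rsmult R x c)) s = vadd R (rsmult R x (c \<otimes> s)) (rsmult R y s)"
    using assms s by (intro vec3_eqI) (simp_all add: l_distr m_assoc a_comm)
  ultimately have "vadd R (rsmult R x (c \<otimes> s)) (rsmult R y s) = vzero R"
    by simp
  then show "s = \<zero>"
    using assms(3,4) s unfolding free_pair_def by blast
qed

lemma rspan_in_PHG_points:
  assumes p: "p \<in> vec3_carrier R" and one: "coord p l = \<one>"
  shows "rspan R p \<in> PHG_points R"
proof -
  have "free_vector R p"
    unfolding free_vector_def
  proof (intro ballI impI)
    fix r assume r: "r \<in> carrier R" and "rsmult R p r = vzero R"
    then have "coord (rsmult R p r) l = coord (vzero R) l"
      by simp
    then show "r = \<zero>"
      using one r by simp
  qed
  then show ?thesis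
    using p by (auto simp: PHG_points_def free_rank1_submodule_iff)
qed

lemma card_points_in_subset_le:
  assumes "set ps \<subseteq> vec3_carrier R" and "L \<subseteq> H"
  shows "card {P \<in> rspan R ` set ps. P \<subseteq> L} \<le> length (filter (\<lambda>p. p \<in> H) ps)"
proof -
  have "{P \<in> rspan R ` set ps. P \<subseteq> L} \<subseteq> rspan R ` set (filter (\<lambda>p. p \<in> H) ps)"
  proof
    fix P assume "P \<in> {P \<in> rspan R ` set ps. P \<subseteq> L}"
    then obtain p where p: "p \<in> set ps" and P: "P = rspan R p" "P \<subseteq> L"
      by blast
    then have "p \<in> H"
      using assms rspan_self by blast
    then show "P \<in> rspan R ` set (filter (\<lambda>p. p \<in> H) ps)"
      using p P by auto
  qed
  then have "card {P \<in> rspan R ` set ps. P \<subseteq> L} \<le> card (rspan R ` set (filter (\<lambda>p. p \<in> H) ps))"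
    by (intro card_mono) auto
  also have "\<dots> \<le> length (filter (\<lambda>p. p \<in> H) ps)"
    by (rule order_trans[OF card_image_le[OF finite_set] card_length])
  finally show ?thesis .
qed

end

section \<open>Lines lie in coordinate hyperplanes\<close>

definition line_form :: "('a \<Rightarrow> bool) \<Rightarrow> nat \<Rightarrow> nat \<Rightarrow> 'a \<Rightarrow> 'a \<Rightarrow> bool" where
  "line_form U i j a b \<longleftrightarrow>
     (i, j) = (0, 1) \<or> (i, j) = (0, 2) \<and> \<not> U b \<or> (i, j) = (1, 2) \<and> \<not> U a \<and> \<not> U b"

text \<open>For a chain ring of length 2, any generator \<open>t\<close> of the maximal ideal will do: the maximal
  ideal consists of the nonunits and squares to zero.\<close>
locale nonunit_annihilator = ring +
  fixes t
  assumes annihilator_closed: "t \<in> carrier R"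
    and annihilator_nonzero: "t \<noteq> \<zero>"
    and nonunit_mult_annihilator: "z \<in> carrier R \<Longrightarrow> z \<notin> Units R \<Longrightarrow> z \<otimes> t = \<zero>"
begin

lemma zero_notin_Units: "\<zero> \<notin> Units R"
proof
  assume "\<zero> \<in> Units R"
  then have "\<one> = \<zero>"
    by (metis Units_r_inv_ex l_null)
  then show False
    using one_zeroD annihilator_closed annihilator_nonzero by blast
qed

lemma unit_if_left_inverse:
  assumes "y \<in> carrier R" "r \<in> carrier R" "y \<otimes> r = \<one>"
  shows "r \<in> Units R"
proof (rule ccontr)
  assume "r \<notin> Units R"
  then have "r \<otimes> t = \<zero>"
    using assms(2) by (simp add: nonunit_mult_annihilator)
  have "t = (y \<otimes> r) \<otimes> t"
    using assms(3) annihilator_closed by simp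
  also have "\<dots> = \<zero>"
    using assms(1,2) annihilator_closed \<open>r \<otimes> t = \<zero>\<close> by (simp add: m_assoc)
  finally show False
    using annihilator_nonzero by contradiction
qed

lemma Units_mult_iff:
  assumes "z \<in> carrier R" "r \<in> carrier R"
  shows "z \<otimes> r \<in> Units R \<longleftrightarrow> z \<in> Units R \<and> r \<in> Units R"
proof
  assume zr: "z \<otimes> r \<in> Units R"
  have "(inv (z \<otimes> r) \<otimes> z) \<otimes> r = \<one>"
    using zr assms by (simp add: m_assoc)
  then have r: "r \<in> Units R"
    using zr assms by (intro unit_if_left_inverse[of "inv (z \<otimes> r) \<otimes> z"]) simp_all
  have "z = (z \<otimes> r) \<otimes> inv r"
    using r assms by (simp add: m_assoc)
  then show "z \<in> Units R \<and> r \<in> Units R"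
    using zr r by (metis Units_inv_Units Units_m_closed)
qed simp

lemma free_vector_unit_coord:
  assumes x: "x \<in> vec3_carrier R" and free: "free_vector R x"
  shows "\<exists>l < 3. coord x l \<in> Units R"
proof (rule ccontr)
  assume "\<not> (\<exists>l < 3. coord x l \<in> Units R)"
  then have "coord x l \<otimes> t = \<zero>" if "l < 3" for l
    using that x by (intro nonunit_mult_annihilator) auto
  then have "rsmult R x t = vzero R"
    by (intro vec3_eqI) simp_all
  then show False
    using free annihilator_closed annihilator_nonzero by (auto simp: free_vector_def)
qed

lemma free_pair_pivot:
  assumes x: "x \<in> vec3_carrier R" and y: "y \<in> vec3_carrier R" and free: "free_pair R x y"
  obtains i x' y' where "i < 3" "x' \<in> vec3_carrier R" "y' \<in> vec3_carrier R"
    "coord x' i = \<one>" "coord y' i = \<zero>" "free_vector R y'" "rspan2 R x y \<subseteq> rspan2 R x' y'"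
proof -
  obtain i where i: "i < 3" "coord x i \<in> Units R"
    using free_vector_unit_coord[OF x free_vector_if_free_pair[OF y free]] by blast
  define u where "u = coord x i"
  have u: "u \<in> carrier R" "inv u \<in> carrier R" "u \<otimes> inv u = \<one>" "inv u \<otimes> u = \<one>"
    using i(2) by (simp_all add: u_def Units_closed)
  define x' where "x' = rsmult R x (inv u)"
  define c where "c = \<ominus> coord y i"
  define y' where "y' = vadd R y (rsmult R x' c)"
  have x': "x' \<in> vec3_carrier R" "coord x' i = \<one>"
    using x u by (simp_all add: x'_def u_def)
  have c: "c \<in> carrier R"
    using y by (simp add: c_def)
  have y': "y' \<in> vec3_carrier R" "coord y' i = \<zero>"
    using y x' by (simp_all add: y'_def c_def r_neg)
  have "y' = vadd R y (rsmult R x (inv u \<otimes> c))"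
    using x y u c by (intro vec3_eqI) (simp_all add: y'_def x'_def m_assoc)
  then have "free_vector R y'"
    using free_vector_vadd_rsmult[OF x y free] u c by simp
  moreover have "rspan2 R x y \<subseteq> rspan2 R x' y'"
  proof (intro rspan2_least vsubmodule_rspan2 x' y')
    have "x = vadd R (rsmult R x' u) (rsmult R y' \<zero>)"
      using x y' u by (intro vec3_eqI) (simp_all add: x'_def m_assoc)
    then show "x \<in> rspan2 R x' y'"
      using u unfolding rspan2_def by blast
    have "y = vadd R (rsmult R x' (coord y i)) (rsmult R y' \<one>)"
      using y x' y' by (intro vec3_eqI) (simp_all add: y'_def c_def r_minus a_lcomm r_neg)
    moreover have "coord y i \<in> carrier R"
      using y by simp
    ultimately show "y \<in> rspan2 R x' y'"
      unfolding rspan2_def by blast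
  qed
  ultimately show thesis
    using that i(1) x' y' by blast
qed

lemma free_pair_echelon:
  assumes x: "x \<in> vec3_carrier R" and y: "y \<in> vec3_carrier R" and free: "free_pair R x y"
  obtains i j p q where "i < 3" "j < 3" "i \<noteq> j" "p \<in> vec3_carrier R" "q \<in> vec3_carrier R"
    "coord p i = \<one>" "coord p j = \<zero>" "coord q i = \<zero>" "coord q j = \<one>"
    "rspan2 R x y \<subseteq> rspan2 R p q"
proof -
  obtain i x' y' where i: "i < 3" and x': "x' \<in> vec3_carrier R" "coord x' i = \<one>"
    and y': "y' \<in> vec3_carrier R" "coord y' i = \<zero>" "free_vector R y'"
    and xy: "rspan2 R x y \<subseteq> rspan2 R x' y'"
    by (rule free_pair_pivot[OF x y free])
  obtain j where j: "j < 3" "coord y' j \<in> Units R"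
    using free_vector_unit_coord[OF y'(1,3)] by blast
  have "i \<noteq> j"
    using j(2) y'(2) zero_notin_Units by auto
  define w where "w = coord y' j"
  have w: "w \<in> carrier R" "inv w \<in> carrier R" "w \<otimes> inv w = \<one>" "inv w \<otimes> w = \<one>"
    using j(2) by (simp_all add: w_def Units_closed)
  define q where "q = rsmult R y' (inv w)"
  define d where "d = coord x' j"
  define p where "p = vadd R x' (rsmult R q (\<ominus> d))"
  have q: "q \<in> vec3_carrier R" "coord q i = \<zero>" "coord q j = \<one>"
    using y' w by (simp_all add: q_def w_def)
  have d: "d \<in> carrier R"
    using x' by (simp add: d_def)
  have p: "p \<in> vec3_carrier R" "coord p i = \<one>" "coord p j = \<zero>"
    using x' q d by (simp_all add: p_def d_def r_neg)
  have "rspan2 R x' y' \<subseteq> rspan2 R p q"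
  proof (intro rspan2_least vsubmodule_rspan2 p q)
    have "x' = vadd R (rsmult R p \<one>) (rsmult R q d)"
      using x' q d by (intro vec3_eqI) (simp_all add: p_def r_minus a_assoc l_neg)
    then show "x' \<in> rspan2 R p q"
      using d unfolding rspan2_def by blast
    have "y' = vadd R (rsmult R p \<zero>) (rsmult R q w)"
      using y' p w by (intro vec3_eqI) (simp_all add: q_def w_def m_assoc)
    then show "y' \<in> rspan2 R p q"
      using w unfolding rspan2_def by blast
  qed
  with xy have "rspan2 R x y \<subseteq> rspan2 R p q"
    by (rule subset_trans)
  then show thesis
    using that i j(1) \<open>i \<noteq> j\<close> p q by blast
qed

lemma line_subset_coord_hyperplane:
  assumes "L \<in> PHG_lines R"
  obtains i j a b where "i < j" "j < 3" "a \<in> carrier R" "b \<in> carrier R"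
    "L \<subseteq> coord_hyperplane R i j (3 - i - j) a b"
proof -
  obtain x y where x: "x \<in> vec3_carrier R" and y: "y \<in> vec3_carrier R"
    and free: "free_pair R x y" and L: "L = rspan2 R x y"
    using assms by (auto simp: PHG_lines_def free_rank2_submodule_iff)
  obtain i j p q where ij: "i < 3" "j < 3" "i \<noteq> j" and pq: "p \<in> vec3_carrier R" "q \<in> vec3_carrier R"
    "coord p i = \<one>" "coord p j = \<zero>" "coord q i = \<zero>" "coord q j = \<one>"
    and sub: "rspan2 R x y \<subseteq> rspan2 R p q"
    by (rule free_pair_echelon[OF x y free])
  define k where "k = 3 - i - j"
  have ab: "coord p k \<in> carrier R" "coord q k \<in> carrier R"
    using pq by simp_all
  have H: "L \<subseteq> coord_hyperplane R i j k (coord p k) (coord q k)"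
    using L sub rspan2_subset_coord_hyperplane[OF pq] by blast
  show thesis
  proof (cases "i < j")
    case True
    then show thesis
      using that ij ab H by (simp add: k_def)
  next
    case False
    then have "j < i" "k = 3 - j - i"
      using ij by (simp_all add: k_def)
    then show thesis
      using that ij ab H coord_hyperplane_swap[OF ab] by simp
  qed
qed

lemma uminus_inv_mult_notin_Units:
  assumes "a \<in> Units R" "b \<in> carrier R" "b \<notin> Units R"
  shows "\<ominus> (inv a \<otimes> b) \<notin> Units R"
proof
  assume "\<ominus> (inv a \<otimes> b) \<in> Units R"
  moreover have "\<ominus> (inv a \<otimes> b) = (inv a \<otimes> \<ominus> \<one>) \<otimes> b"
    using assms by (simp add: r_minus l_minus m_assoc)
  ultimately show False
    using assms by (simp add: Units_mult_iff)
qed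

lemma line_subset_normal_coord_hyperplane:
  assumes "L \<in> PHG_lines R"
  obtains i j a b where "line_form (\<lambda>z. z \<in> Units R) i j a b" "a \<in> carrier R" "b \<in> carrier R"
    "L \<subseteq> coord_hyperplane R i j (3 - i - j) a b"
proof -
  obtain i j a b where ij: "i < j" "j < 3" and ab: "a \<in> carrier R" "b \<in> carrier R"
    and L: "L \<subseteq> coord_hyperplane R i j (3 - i - j) a b"
    using assms by (rule line_subset_coord_hyperplane)
  then consider "(i, j) = (0, 1)"
    | "(i, j) = (0, 2)" "b \<notin> Units R" | "(i, j) = (0, 2)" "b \<in> Units R"
    | "(i, j) = (1, 2)" "a \<notin> Units R" "b \<notin> Units R" | "(i, j) = (1, 2)" "b \<in> Units R"
    | "(i, j) = (1, 2)" "a \<in> Units R" "b \<notin> Units R"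
    by (cases "a \<in> Units R"; cases "b \<in> Units R") (auto simp: less_Suc_eq numeral_3_eq_3)
  then show thesis
  proof cases
    case 3
    then have "L \<subseteq> coord_hyperplane R 0 1 2 (\<ominus> (inv b \<otimes> a)) (inv b)"
      using L coord_hyperplane_solve[OF ab(1) 3(2), of 0 2 1] by simp
    with ab 3 show thesis
      by (intro that[of 0 1]) (simp_all add: line_form_def)
  next
    case 5
    then have "L \<subseteq> coord_hyperplane R 0 1 2 (inv b) (\<ominus> (inv b \<otimes> a))"
      using L coord_hyperplane_120_solve_right[OF ab(1) 5(2)] by simp
    with ab 5 show thesis
      by (intro that[of 0 1]) (simp_all add: line_form_def)
  next
    case 6
    then have "L \<subseteq> coord_hyperplane R 0 2 1 (inv a) (\<ominus> (inv a \<otimes> b))"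
      using L coord_hyperplane_120_solve_left[OF 6(2) ab(2)] by simp
    with ab 6 show thesis
      by (intro that[of 0 2]) (simp_all add: line_form_def uminus_inv_mult_notin_Units)
  qed (use that[of i j a b] ab L in \<open>auto simp: line_form_def\<close>)
qed

end

section \<open>Arcs from lists of normalized generators\<close>

definition leading_unit_one :: "('a \<Rightarrow> bool) \<Rightarrow> 'a \<Rightarrow> 'a vec3 \<Rightarrow> bool" where
  "leading_unit_one U e p \<longleftrightarrow>
     (if U (coord p 0) then coord p 0 = e else if U (coord p 1) then coord p 1 = e else coord p 2 = e)"

lemma leading_unit_oneE:
  assumes "leading_unit_one U e p"
  obtains l where "l < 3" "coord p l = e" "\<And>i. i < l \<Longrightarrow> \<not> U (coord p i)"
proof -
  consider "U (coord p 0)" | "\<not> U (coord p 0)" "U (coord p 1)" | "\<not> U (coord p 0)" "\<not> U (coord p 1)"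
    by blast
  then show thesis
  proof cases
    case 1
    then show thesis
      using that[of 0] assms by (simp add: leading_unit_one_def)
  next
    case 2
    then show thesis
      using that[of 1] assms by (simp add: leading_unit_one_def less_Suc_eq)
  next
    case 3
    then show thesis
      using assms by (intro that[of 2]) (auto simp: leading_unit_one_def less_Suc_eq numeral_2_eq_2)
  qed
qed

context nonunit_annihilator
begin

lemma leading_unit_one_rspan_eq:
  assumes p: "p \<in> vec3_carrier R" and q: "q \<in> rspan R p"
    and p_one: "leading_unit_one (\<lambda>z. z \<in> Units R) \<one> p"
    and q_one: "leading_unit_one (\<lambda>z. z \<in> Units R) \<one> q"
  shows "q = p"
proof -
  obtain r where r: "r \<in> carrier R" and q_def: "q = rsmult R p r"
    using q by (auto simp: rspan_def)
  have coord_q: "coord q i = coord p i \<otimes> r" for i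
    by (simp add: q_def)
  obtain l where l: "l < 3" "coord p l = \<one>" "\<And>i. i < l \<Longrightarrow> coord p i \<notin> Units R"
    by (rule leading_unit_oneE[OF p_one]) blast
  obtain l' where l': "l' < 3" "coord q l' = \<one>" "\<And>i. i < l' \<Longrightarrow> coord q i \<notin> Units R"
    by (rule leading_unit_oneE[OF q_one]) blast
  have "coord p l' \<otimes> r \<in> Units R"
    using l'(2) coord_q by simp
  then have "r \<in> Units R"
    using p r by (simp add: Units_mult_iff)
  then have "coord q l \<in> Units R"
    using coord_q l(2) r by simp
  then have "\<not> l < l'"
    using l'(3) by blast
  moreover have "\<not> l' < l"
    using l'(2) l(3) coord_q p r by (metis Units_mult_iff coord_closed Units_one_closed)
  ultimately have "r = \<one>"
    using coord_q l(2) l'(2) r by simp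
  then show ?thesis
    using p by (simp add: q_def)
qed

lemma inj_on_rspan:
  assumes "S \<subseteq> vec3_carrier R" and "\<And>p. p \<in> S \<Longrightarrow> leading_unit_one (\<lambda>z. z \<in> Units R) \<one> p"
  shows "inj_on (rspan R) S"
proof (rule inj_onI)
  fix p q assume p: "p \<in> S" and q: "q \<in> S" and "rspan R p = rspan R q"
  then have "q \<in> rspan R p"
    using assms(1) rspan_self by blast
  then have "q = p"
    using assms p q by (intro leading_unit_one_rspan_eq) auto
  then show "p = q"
    by simp
qed

lemma projective_arc_rspan_list:
  assumes car: "set ps \<subseteq> vec3_carrier R"
    and normalized: "\<And>p. p \<in> set ps \<Longrightarrow> leading_unit_one (\<lambda>z. z \<in> Units R) \<one> p"
    and "distinct ps"
    and lines: "\<And>i j a b. line_form (\<lambda>z. z \<in> Units R) i j a b \<Longrightarrow> a \<in> carrier R \<Longrightarrow> b \<in> carrier R \<Longrightarrow>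
      length (filter (\<lambda>p. p \<in> coord_hyperplane R i j (3 - i - j) a b) ps) \<le> n"
  shows "projective_arc R (rspan R ` set ps) (length ps) n"
  unfolding projective_arc_def
proof (intro conjI ballI)
  show "rspan R ` set ps \<subseteq> PHG_points R"
  proof
    fix P assume "P \<in> rspan R ` set ps"
    then obtain p where "p \<in> set ps" "P = rspan R p"
      by blast
    moreover obtain l where "coord p l = \<one>"
      using normalized[OF \<open>p \<in> set ps\<close>] by (rule leading_unit_oneE)
    ultimately show "P \<in> PHG_points R"
      using car rspan_in_PHG_points by blast
  qed
  show "card (rspan R ` set ps) = length ps"
    using inj_on_rspan[OF car normalized] \<open>distinct ps\<close> by (simp add: card_image distinct_card)
  show "finite (rspan R ` set ps)"
    by simp
  fix L assume "L \<in> PHG_lines R"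
  then obtain i j a b where "line_form (\<lambda>z. z \<in> Units R) i j a b" "a \<in> carrier R" "b \<in> carrier R"
    and L: "L \<subseteq> coord_hyperplane R i j (3 - i - j) a b"
    by (rule line_subset_normal_coord_hyperplane)
  then show "card {P \<in> rspan R ` set ps. P \<subseteq> L} \<le> n"
    using card_points_in_subset_le[OF car L] lines le_trans by blast
qed

end

section \<open>Transfer from a finite model\<close>

abbreviation vmap :: "('b \<Rightarrow> 'a) \<Rightarrow> 'b vec3 \<Rightarrow> 'a vec3" where
  "vmap f \<equiv> map_prod f (map_prod f f)"

lemma coord_vmap [simp]: "coord (vmap f p) l = f (coord p l)"
  by (cases p) (simp add: coord_def)

lemma leading_unit_one_vmap:
  assumes "inj f"
  shows "leading_unit_one U (f e) (vmap f p) \<longleftrightarrow> leading_unit_one (U \<circ> f) e p"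
  by (simp add: leading_unit_one_def inj_eq[OF assms])

definition ring_laws :: "('b \<Rightarrow> 'b \<Rightarrow> 'b) \<Rightarrow> ('b \<Rightarrow> 'b \<Rightarrow> 'b) \<Rightarrow> 'b \<Rightarrow> 'b \<Rightarrow> bool" where
  "ring_laws m a e z \<longleftrightarrow>
     (\<forall>x y w. m (m x y) w = m x (m y w) \<and> a (a x y) w = a x (a y w) \<and>
        m (a x y) w = a (m x w) (m y w) \<and> m w (a x y) = a (m w x) (m w y)) \<and>
     (\<forall>x y. a x y = a y x) \<and>
     (\<forall>x. m e x = x \<and> m x e = x \<and> a z x = x \<and> (\<exists>y. a y x = z))"

text \<open>The points come in short chunks: evaluation by rewriting re-traverses the rest of a list at
  every recursive step, so counting chunk by chunk is much faster than over one long list.\<close>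
definition arc_certificate ::
    "('b \<Rightarrow> 'b \<Rightarrow> 'b) \<Rightarrow> ('b \<Rightarrow> 'b \<Rightarrow> 'b) \<Rightarrow> 'b \<Rightarrow> 'b::linorder vec3 list list \<Rightarrow> nat \<Rightarrow> bool" where
  "arc_certificate m a e pss n \<longleftrightarrow>
     successively (<) (concat pss) \<and>
     (\<forall>ps \<in> set pss. \<forall>p \<in> set ps. leading_unit_one (\<lambda>x. \<exists>y. m x y = e \<and> m y x = e) e p) \<and>
     (\<forall>(i, j) \<in> set [(0, 1), (0, 2), (1, 2)]. \<forall>c d.
        (if line_form (\<lambda>x. \<exists>y. m x y = e \<and> m y x = e) i j c d
         then sum_list (map (\<lambda>ps. length (filter
           (\<lambda>p. coord p (3 - i - j) = a (m c (coord p i)) (m d (coord p j))) ps)) pss) \<le> n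
         else True))"

locale ring_model =
  fixes R :: "('a, 'c) ring_scheme" and E :: "'b::linorder \<Rightarrow> 'a"
    and m a :: "'b \<Rightarrow> 'b \<Rightarrow> 'b" and e z :: 'b
  assumes carrier_eq: "carrier R = range E"
    and inj_E: "inj E"
    and E_mult: "E x \<otimes>\<^bsub>R\<^esub> E y = E (m x y)"
    and E_add: "E x \<oplus>\<^bsub>R\<^esub> E y = E (a x y)"
    and E_one: "\<one>\<^bsub>R\<^esub> = E e"
    and E_zero: "\<zero>\<^bsub>R\<^esub> = E z"
begin

lemma ring:
  assumes "ring_laws m a e z"
  shows "ring R"
proof -
  have m_assoc: "m (m x y) w = m x (m y w)" and a_assoc: "a (a x y) w = a x (a y w)"
    and l_distr: "m (a x y) w = a (m x w) (m y w)" and r_distr: "m w (a x y) = a (m w x) (m w y)"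
    and a_comm: "a x y = a y x" and l_one: "m e x = x" and r_one: "m x e = x"
    and l_zero: "a z x = x" and l_neg: "\<exists>y. a y x = z" for x y w
    using assms unfolding ring_laws_def by (blast+)
  have "abelian_group R"
  proof (rule abelian_groupI)
    fix x assume "x \<in> carrier R"
    then obtain x' where x: "x = E x'"
      using carrier_eq by blast
    obtain y' where "a y' x' = z"
      using l_neg by blast
    then show "\<exists>y \<in> carrier R. y \<oplus>\<^bsub>R\<^esub> x = \<zero>\<^bsub>R\<^esub>"
      using carrier_eq by (intro bexI[of _ "E y'"]) (simp_all add: x E_add E_zero)
  next
    fix x y assume "x \<in> carrier R" "y \<in> carrier R"
    then show "x \<oplus>\<^bsub>R\<^esub> y = y \<oplus>\<^bsub>R\<^esub> x"
      using carrier_eq by (auto simp: E_add a_comm)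
  qed (auto simp: carrier_eq E_add E_zero a_assoc l_zero)
  moreover have "monoid R"
    by (rule monoidI) (auto simp: carrier_eq E_mult E_one m_assoc l_one r_one)
  ultimately show ?thesis
    by (rule ringI) (auto simp: carrier_eq E_mult E_add l_distr r_distr)
qed

lemma Units_iff: "E x \<in> Units R \<longleftrightarrow> (\<exists>y. m x y = e \<and> m y x = e)"
proof
  assume "E x \<in> Units R"
  then obtain w where "w \<in> carrier R" "w \<otimes>\<^bsub>R\<^esub> E x = \<one>\<^bsub>R\<^esub>" "E x \<otimes>\<^bsub>R\<^esub> w = \<one>\<^bsub>R\<^esub>"
    unfolding Units_def by blast
  moreover obtain y where "w = E y"
    using \<open>w \<in> carrier R\<close> carrier_eq by blast
  ultimately show "\<exists>y. m x y = e \<and> m y x = e"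
    by (auto simp: E_mult E_one inj_eq[OF inj_E])
next
  assume "\<exists>y. m x y = e \<and> m y x = e"
  then obtain y where "m x y = e" "m y x = e"
    by blast
  then have "E y \<otimes>\<^bsub>R\<^esub> E x = \<one>\<^bsub>R\<^esub>" "E x \<otimes>\<^bsub>R\<^esub> E y = \<one>\<^bsub>R\<^esub>"
    by (simp_all add: E_mult E_one)
  then show "E x \<in> Units R"
    using carrier_eq unfolding Units_def by blast
qed

lemma nonunit_annihilator:
  assumes "ring R" and "t \<noteq> z"
    and units: "\<forall>x. (\<exists>y. m x y = e \<and> m y x = e) \<or> m x t = z"
  shows "nonunit_annihilator R (E t)"
proof -
  interpret ring R by (rule assms(1))
  show ?thesis
  proof
    show "E t \<in> carrier R" "E t \<noteq> \<zero>\<^bsub>R\<^esub>"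
      using carrier_eq inj_E assms(2) by (auto simp: E_zero inj_eq)
  next
    fix w assume "w \<in> carrier R" "w \<notin> Units R"
    then obtain x where w: "w = E x"
      using carrier_eq by blast
    then have "\<not> (\<exists>y. m x y = e \<and> m y x = e)"
      using Units_iff \<open>w \<notin> Units R\<close> by simp
    then have "m x t = z"
      using units by blast
    then show "w \<otimes>\<^bsub>R\<^esub> E t = \<zero>\<^bsub>R\<^esub>"
      by (simp add: w E_mult E_zero)
  qed
qed

lemma vmap_carrier: "vmap E p \<in> vec3_carrier R"
  using carrier_eq by (cases p) (simp add: vec3_carrier_def)

lemma leading_unit_one_vmap_iff:
  "leading_unit_one (\<lambda>z. z \<in> Units R) \<one>\<^bsub>R\<^esub> (vmap E p) \<longleftrightarrow>
     leading_unit_one (\<lambda>x. \<exists>y. m x y = e \<and> m y x = e) e p"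
  using leading_unit_one_vmap[OF inj_E, of "\<lambda>z. z \<in> Units R" e p]
  by (simp add: E_one comp_def Units_iff)

lemma vmap_in_coord_hyperplane_iff:
  "vmap E p \<in> coord_hyperplane R i j k (E c) (E d) \<longleftrightarrow> coord p k = a (m c (coord p i)) (m d (coord p j))"
  using vmap_carrier by (simp add: coord_hyperplane_def E_mult E_add inj_eq[OF inj_E])

lemma projective_arc:
  assumes "nonunit_annihilator R t" and cert: "arc_certificate m a e pss n"
  shows "projective_arc R (rspan R ` set (map (vmap E) (concat pss))) (length (concat pss)) n"
proof -
  interpret nonunit_annihilator R t by (rule assms(1))
  have sorted: "successively (<) (concat pss)"
    using cert by (simp add: arc_certificate_def)
  have normalized: "\<forall>ps \<in> set pss. \<forall>p \<in> set ps. leading_unit_one (\<lambda>x. \<exists>y. m x y = e \<and> m y x = e) e p"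
    using cert by (simp add: arc_certificate_def)
  have lines: "\<forall>(i, j) \<in> set [(0, 1), (0, 2), (1, 2)]. \<forall>c d.
      (if line_form (\<lambda>x. \<exists>y. m x y = e \<and> m y x = e) i j c d
       then sum_list (map (\<lambda>ps. length (filter
         (\<lambda>p. coord p (3 - i - j) = a (m c (coord p i)) (m d (coord p j))) ps)) pss) \<le> n
       else True)"
    using cert unfolding arc_certificate_def by (elim conjE) assumption
  have "projective_arc R (rspan R ` set (map (vmap E) (concat pss))) (length (map (vmap E) (concat pss))) n"
  proof (rule projective_arc_rspan_list)
    show "set (map (vmap E) (concat pss)) \<subseteq> vec3_carrier R"
      using vmap_carrier by auto
    show "leading_unit_one (\<lambda>z. z \<in> Units R) \<one>\<^bsub>R\<^esub> p" if p: "p \<in> set (map (vmap E) (concat pss))" for p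
    proof -
      obtain p' where p': "p = vmap E p'" "p' \<in> set (concat pss)"
        using p unfolding set_map by (rule imageE)
      then have "leading_unit_one (\<lambda>x. \<exists>y. m x y = e \<and> m y x = e) e p'"
        using normalized by auto
      then show ?thesis
        by (simp add: p'(1) leading_unit_one_vmap_iff)
    qed
    have "inj (vmap E)"
      using inj_E by (intro prod.inj_map)
    then show "distinct (map (vmap E) (concat pss))"
      using sorted
      by (simp add: distinct_map inj_on_subset[OF _ subset_UNIV] successively_conv_sorted_wrt strict_sorted_iff)
  next
    fix i j :: nat and b d
    assume ij: "line_form (\<lambda>z. z \<in> Units R) i j b d" and "b \<in> carrier R" "d \<in> carrier R"
    then obtain c' d' where cd: "b = E c'" "d = E d'"
      using carrier_eq by blast
    have "(i, j) \<in> set [(0, 1), (0, 2), (1, 2)]"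
      using ij by (auto simp: line_form_def)
    from bspec[OF lines this]
    have all_cd: "\<forall>c d. if line_form (\<lambda>x. \<exists>y. m x y = e \<and> m y x = e) i j c d
       then sum_list (map (\<lambda>ps. length (filter
         (\<lambda>p. coord p (3 - i - j) = a (m c (coord p i)) (m d (coord p j))) ps)) pss) \<le> n
       else True"
      by (simp only: prod.case)
    have "if line_form (\<lambda>x. \<exists>y. m x y = e \<and> m y x = e) i j c' d'
       then sum_list (map (\<lambda>ps. length (filter
         (\<lambda>p. coord p (3 - i - j) = a (m c' (coord p i)) (m d' (coord p j))) ps)) pss) \<le> n
       else True"
      using spec[of _ c', OF all_cd] by (rule spec[of _ d'])
    moreover have "line_form (\<lambda>x. \<exists>y. m x y = e \<and> m y x = e) i j c' d'"
      using ij by (simp add: line_form_def cd Units_iff)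
    ultimately have "sum_list (map (\<lambda>ps. length (filter
        (\<lambda>p. coord p (3 - i - j) = a (m c' (coord p i)) (m d' (coord p j))) ps)) pss) \<le> n"
      by simp
    then show "length (filter (\<lambda>p. p \<in> coord_hyperplane R i j (3 - i - j) b d) (map (vmap E) (concat pss))) \<le> n"
      by (simp add: filter_map filter_concat length_concat comp_def cd vmap_in_coord_hyperplane_iff)
  qed
  then show ?thesis
    by simp
qed

lemma exists_projective_arc:
  assumes "ring_laws m a e z" and "t \<noteq> z" and "\<forall>x. (\<exists>y. m x y = e \<and> m y x = e) \<or> m x t = z"
    and "arc_certificate m a e pss n" and "length (concat pss) = k"
  shows "\<exists>A. projective_arc R A k n"
  using projective_arc[OF nonunit_annihilator[OF ring[OF assms(1)] assms(2,3)] assms(4)] assms(5)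
  by blast

end

section \<open>The three rings\<close>

text \<open>The digits \<open>0, \<dots>, 3\<close> of the definitions as constructors: rewriting evaluates pattern
  matching on constructors much faster than arithmetic on numerals.\<close>
datatype four = F0 | F1 | F2 | F3

fun nat_of_four :: "four \<Rightarrow> nat" where
  "nat_of_four F0 = 0" | "nat_of_four F1 = 1" | "nat_of_four F2 = 2" | "nat_of_four F3 = 3"

lemma nat_of_four_eq_iff [simp]: "nat_of_four x = nat_of_four y \<longleftrightarrow> x = y"
  by (cases x; cases y) simp_all

lemma range_nat_of_four: "range nat_of_four = {0..<4}"
proof (intro equalityI subsetI)
  fix n assume "n \<in> range nat_of_four"
  then obtain x where "n = nat_of_four x"
    by blast
  then show "n \<in> {0..<4}"
    by (cases x) simp_all
next
  fix n :: nat assume "n \<in> {0..<4}"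
  then have "n \<in> {nat_of_four F0, nat_of_four F1, nat_of_four F2, nat_of_four F3}"
    by auto
  then show "n \<in> range nat_of_four"
    by blast
qed

instantiation four :: enum
begin

definition "enum_four = [F0, F1, F2, F3]"
definition "enum_all_four P \<longleftrightarrow> P F0 \<and> P F1 \<and> P F2 \<and> P F3"
definition "enum_ex_four P \<longleftrightarrow> P F0 \<or> P F1 \<or> P F2 \<or> P F3"

instance
proof
  have UNIV: "UNIV = {F0, F1, F2, F3}"
    using four.exhaust by blast
  show "(UNIV :: four set) = set enum_class.enum"
    by (simp add: UNIV enum_four_def)
  show "distinct (enum_class.enum :: four list)"
    by (simp add: enum_four_def)
  show "enum_class.enum_all P \<longleftrightarrow> Ball UNIV P" for P :: "four \<Rightarrow> bool"
    by (simp add: UNIV enum_all_four_def)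
  show "enum_class.enum_ex P \<longleftrightarrow> Bex UNIV P" for P :: "four \<Rightarrow> bool"
    by (simp add: UNIV enum_ex_four_def)
qed

end

instantiation four :: linorder
begin

definition less_eq_four :: "four \<Rightarrow> four \<Rightarrow> bool" where
  "x \<le> y \<longleftrightarrow> nat_of_four x \<le> nat_of_four y"

definition less_four :: "four \<Rightarrow> four \<Rightarrow> bool" where
  "x < y \<longleftrightarrow> nat_of_four x < nat_of_four y"

instance
  by standard (auto simp: less_eq_four_def less_four_def simp flip: nat_of_four_eq_iff)

end

abbreviation digits :: "four \<times> four \<Rightarrow> nat \<times> nat" where
  "digits \<equiv> map_prod nat_of_four nat_of_four"

lemma inj_digits: "inj digits"
  by (intro prod.inj_map) (simp_all add: inj_def)

lemma range_digits: "range digits = {0..<4} \<times> {0..<4}"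
  using map_prod_surj_on[OF range_nat_of_four range_nat_of_four] by simp

definition pair_add :: "('b \<Rightarrow> 'b \<Rightarrow> 'b) \<Rightarrow> 'b \<times> 'b \<Rightarrow> 'b \<times> 'b \<Rightarrow> 'b \<times> 'b" where
  "pair_add f x y = (f (fst x) (fst y), f (snd x) (snd y))"

fun f4_add :: "four \<Rightarrow> four \<Rightarrow> four" where
  "f4_add F0 y = y"
| "f4_add x F0 = x"
| "f4_add F1 F1 = F0" | "f4_add F1 F2 = F3" | "f4_add F1 F3 = F2"
| "f4_add F2 F1 = F3" | "f4_add F2 F2 = F0" | "f4_add F2 F3 = F1"
| "f4_add F3 F1 = F2" | "f4_add F3 F2 = F1" | "f4_add F3 F3 = F0"

fun f4_mult :: "four \<Rightarrow> four \<Rightarrow> four" where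
  "f4_mult F0 y = F0"
| "f4_mult x F0 = F0"
| "f4_mult F1 y = y"
| "f4_mult x F1 = x"
| "f4_mult F2 F2 = F3" | "f4_mult F2 F3 = F1"
| "f4_mult F3 F2 = F1" | "f4_mult F3 F3 = F2"

lemma f4add_nat_of_four: "f4add (nat_of_four x) (nat_of_four y) = nat_of_four (f4_add x y)"
  by (cases x; cases y) (simp_all add: f4add_def)

lemma f4mul_nat_of_four: "f4mul (nat_of_four x) (nat_of_four y) = nat_of_four (f4_mult x y)"
  by (cases x; cases y) (simp_all add: f4mul_def)

fun z4_add :: "four \<Rightarrow> four \<Rightarrow> four" where
  "z4_add F0 y = y"
| "z4_add x F0 = x"
| "z4_add F1 F1 = F2" | "z4_add F1 F2 = F3" | "z4_add F1 F3 = F0"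
| "z4_add F2 F1 = F3" | "z4_add F2 F2 = F0" | "z4_add F2 F3 = F1"
| "z4_add F3 F1 = F0" | "z4_add F3 F2 = F1" | "z4_add F3 F3 = F2"

fun z4_mult :: "four \<Rightarrow> four \<Rightarrow> four" where
  "z4_mult F0 y = F0"
| "z4_mult x F0 = F0"
| "z4_mult F1 y = y"
| "z4_mult x F1 = x"
| "z4_mult F2 F2 = F0" | "z4_mult F2 F3 = F2"
| "z4_mult F3 F2 = F2" | "z4_mult F3 F3 = F1"

definition S4_mult :: "four \<times> four \<Rightarrow> four \<times> four \<Rightarrow> four \<times> four" where
  "S4_mult x y = (case x of (a, b) \<Rightarrow> case y of (c, d) \<Rightarrow>
     (f4_mult a c, f4_add (f4_mult a d) (f4_mult b c)))"

definition T4_mult :: "four \<times> four \<Rightarrow> four \<times> four \<Rightarrow> four \<times> four" where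
  "T4_mult x y = (case x of (a, b) \<Rightarrow> case y of (c, d) \<Rightarrow>
     (f4_mult a c, f4_add (f4_mult a d) (f4_mult b (f4_mult c c))))"

definition G4_mult :: "four \<times> four \<Rightarrow> four \<times> four \<Rightarrow> four \<times> four" where
  "G4_mult x y = (case x of (a, b) \<Rightarrow> case y of (c, d) \<Rightarrow>
     (z4_add (z4_mult a c) (z4_mult F3 (z4_mult b d)),
      z4_add (z4_add (z4_mult a d) (z4_mult b c)) (z4_mult F3 (z4_mult b d))))"

lemma ring_model_S4: "ring_model S4 digits S4_mult (pair_add f4_add) (F1, F0) (F0, F0)"
  by unfold_locales
    (auto simp: S4_def range_digits inj_digits S4_mult_def pair_add_def f4add_nat_of_four f4mul_nat_of_four
      split: prod.splits)

lemma ring_model_T4: "ring_model T4 digits T4_mult (pair_add f4_add) (F1, F0) (F0, F0)"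
  by unfold_locales
    (auto simp: T4_def range_digits inj_digits T4_mult_def pair_add_def f4add_nat_of_four f4mul_nat_of_four
      split: prod.splits)

lemma G4_mult_digits: "digits x \<otimes>\<^bsub>G4\<^esub> digits y = digits (G4_mult x y)"
proof -
  obtain a b c d where "x = (a, b)" "y = (c, d)"
    by fastforce
  then show ?thesis
    by (cases a; cases b; cases c; cases d) (simp_all add: G4_def G4_mult_def)
qed

lemma G4_add_digits: "digits x \<oplus>\<^bsub>G4\<^esub> digits y = digits (pair_add z4_add x y)"
proof -
  obtain a b c d where "x = (a, b)" "y = (c, d)"
    by fastforce
  then show ?thesis
    by (cases a; cases b; cases c; cases d) (simp_all add: G4_def pair_add_def)
qed

lemma ring_model_G4: "ring_model G4 digits G4_mult (pair_add z4_add) (F1, F0) (F0, F0)"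
  by unfold_locales (rule G4_mult_digits G4_add_digits | simp add: G4_def range_digits inj_digits)+

definition G4_points :: "(four \<times> four) vec3 list list" where
  "G4_points = [
    [((F0, F0), (F0, F2), (F1, F0)), ((F0, F0), (F1, F0), (F0, F2)), ((F0, F0), (F1, F0), (F0, F3)),
     ((F0, F0), (F1, F0), (F1, F0)), ((F0, F0), (F1, F0), (F1, F1)), ((F0, F0), (F1, F0), (F2, F0)),
     ((F0, F0), (F1, F0), (F2, F1)), ((F0, F0), (F1, F0), (F2, F3)), ((F0, F0), (F1, F0), (F3, F0)),
     ((F0, F0), (F1, F0), (F3, F1)), ((F0, F0), (F1, F0), (F3, F2)), ((F0, F0), (F1, F0), (F3, F3)),
     ((F0, F0), (F2, F2), (F1, F0)), ((F0, F2), (F0, F0), (F1, F0))],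
    [((F0, F2), (F1, F0), (F0, F1)), ((F0, F2), (F1, F0), (F0, F3)), ((F0, F2), (F1, F0), (F1, F0)),
     ((F0, F2), (F1, F0), (F1, F1)), ((F0, F2), (F1, F0), (F1, F2)), ((F0, F2), (F1, F0), (F1, F3)),
     ((F0, F2), (F1, F0), (F2, F0)), ((F0, F2), (F1, F0), (F2, F1)), ((F0, F2), (F1, F0), (F2, F2)),
     ((F0, F2), (F1, F0), (F3, F0)), ((F0, F2), (F1, F0), (F3, F1)), ((F0, F2), (F2, F0), (F1, F0)),
     ((F1, F0), (F0, F0), (F0, F2)), ((F1, F0), (F0, F0), (F0, F3))],
    [((F1, F0), (F0, F0), (F1, F0)), ((F1, F0), (F0, F0), (F1, F2)), ((F1, F0), (F0, F0), (F1, F3)),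
     ((F1, F0), (F0, F0), (F2, F0)), ((F1, F0), (F0, F0), (F2, F1)), ((F1, F0), (F0, F0), (F2, F2)),
     ((F1, F0), (F0, F0), (F2, F3)), ((F1, F0), (F0, F0), (F3, F0)), ((F1, F0), (F0, F0), (F3, F3)),
     ((F1, F0), (F0, F1), (F0, F1)), ((F1, F0), (F0, F1), (F0, F2)), ((F1, F0), (F0, F1), (F0, F3)),
     ((F1, F0), (F0, F1), (F1, F0)), ((F1, F0), (F0, F1), (F1, F1))],
    [((F1, F0), (F0, F1), (F1, F2)), ((F1, F0), (F0, F1), (F2, F0)), ((F1, F0), (F0, F1), (F2, F1)),
     ((F1, F0), (F0, F1), (F2, F2)), ((F1, F0), (F0, F1), (F3, F1)), ((F1, F0), (F0, F1), (F3, F3)),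
     ((F1, F0), (F0, F2), (F0, F1)), ((F1, F0), (F0, F2), (F0, F2)), ((F1, F0), (F0, F2), (F0, F3)),
     ((F1, F0), (F0, F2), (F1, F0)), ((F1, F0), (F0, F2), (F1, F2)), ((F1, F0), (F0, F2), (F1, F3)),
     ((F1, F0), (F0, F2), (F2, F0)), ((F1, F0), (F0, F2), (F2, F1))],
    [((F1, F0), (F0, F2), (F2, F2)), ((F1, F0), (F0, F2), (F3, F0)), ((F1, F0), (F0, F2), (F3, F3)),
     ((F1, F0), (F0, F3), (F0, F1)), ((F1, F0), (F0, F3), (F0, F2)), ((F1, F0), (F0, F3), (F1, F0)),
     ((F1, F0), (F0, F3), (F1, F1)), ((F1, F0), (F0, F3), (F2, F0)), ((F1, F0), (F0, F3), (F2, F1)),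
     ((F1, F0), (F0, F3), (F2, F2)), ((F1, F0), (F0, F3), (F2, F3)), ((F1, F0), (F0, F3), (F3, F1)),
     ((F1, F0), (F0, F3), (F3, F3)), ((F1, F0), (F1, F0), (F0, F1))],
    [((F1, F0), (F1, F0), (F0, F3)), ((F1, F0), (F1, F0), (F1, F1)), ((F1, F0), (F1, F0), (F1, F3)),
     ((F1, F0), (F1, F0), (F2, F1)), ((F1, F0), (F1, F0), (F2, F2)), ((F1, F0), (F1, F0), (F2, F3)),
     ((F1, F0), (F1, F0), (F3, F1)), ((F1, F0), (F1, F0), (F3, F3)), ((F1, F0), (F1, F1), (F0, F1)),
     ((F1, F0), (F1, F1), (F0, F3)), ((F1, F0), (F1, F1), (F1, F1)), ((F1, F0), (F1, F1), (F1, F2)),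
     ((F1, F0), (F1, F1), (F2, F0)), ((F1, F0), (F1, F1), (F2, F1))],
    [((F1, F0), (F1, F1), (F2, F3)), ((F1, F0), (F1, F2), (F2, F2)), ((F1, F0), (F1, F3), (F0, F1)),
     ((F1, F0), (F1, F3), (F0, F3)), ((F1, F0), (F1, F3), (F1, F0)), ((F1, F0), (F1, F3), (F1, F1)),
     ((F1, F0), (F1, F3), (F1, F2)), ((F1, F0), (F1, F3), (F2, F1)), ((F1, F0), (F1, F3), (F2, F2)),
     ((F1, F0), (F1, F3), (F2, F3)), ((F1, F0), (F1, F3), (F3, F1)), ((F1, F0), (F1, F3), (F3, F2)),
     ((F1, F0), (F1, F3), (F3, F3)), ((F1, F0), (F2, F0), (F0, F1))],
    [((F1, F0), (F2, F0), (F0, F2)), ((F1, F0), (F2, F0), (F1, F0)), ((F1, F0), (F2, F0), (F1, F2)),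
     ((F1, F0), (F2, F0), (F1, F3)), ((F1, F0), (F2, F0), (F2, F0)), ((F1, F0), (F2, F0), (F2, F1)),
     ((F1, F0), (F2, F0), (F2, F2)), ((F1, F0), (F2, F0), (F2, F3)), ((F1, F0), (F2, F0), (F3, F0)),
     ((F1, F0), (F2, F1), (F0, F2)), ((F1, F0), (F2, F1), (F0, F3)), ((F1, F0), (F2, F1), (F1, F0)),
     ((F1, F0), (F2, F1), (F1, F1)), ((F1, F0), (F2, F1), (F1, F2))],
    [((F1, F0), (F2, F1), (F2, F0)), ((F1, F0), (F2, F1), (F2, F1)), ((F1, F0), (F2, F1), (F2, F2)),
     ((F1, F0), (F2, F1), (F2, F3)), ((F1, F0), (F2, F1), (F3, F1)), ((F1, F0), (F2, F1), (F3, F3)),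
     ((F1, F0), (F2, F2), (F0, F1)), ((F1, F0), (F2, F2), (F0, F2)), ((F1, F0), (F2, F2), (F0, F3)),
     ((F1, F0), (F2, F2), (F1, F0)), ((F1, F0), (F2, F2), (F1, F1)), ((F1, F0), (F2, F2), (F1, F2)),
     ((F1, F0), (F2, F2), (F2, F0)), ((F1, F0), (F2, F2), (F2, F2))],
    [((F1, F0), (F2, F2), (F2, F3)), ((F1, F0), (F2, F2), (F3, F0)), ((F1, F0), (F2, F2), (F3, F3)),
     ((F1, F0), (F2, F3), (F0, F1)), ((F1, F0), (F2, F3), (F0, F2)), ((F1, F0), (F2, F3), (F0, F3)),
     ((F1, F0), (F2, F3), (F1, F0)), ((F1, F0), (F2, F3), (F1, F1)), ((F1, F0), (F2, F3), (F2, F0)),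
     ((F1, F0), (F2, F3), (F2, F2)), ((F1, F0), (F2, F3), (F2, F3)), ((F1, F0), (F2, F3), (F3, F0)),
     ((F1, F0), (F2, F3), (F3, F1)), ((F1, F0), (F2, F3), (F3, F3))],
    [((F1, F0), (F3, F0), (F0, F1)), ((F1, F0), (F3, F0), (F0, F3)), ((F1, F0), (F3, F0), (F1, F0)),
     ((F1, F0), (F3, F0), (F1, F2)), ((F1, F0), (F3, F0), (F2, F0)), ((F1, F0), (F3, F0), (F2, F1)),
     ((F1, F0), (F3, F0), (F2, F3)), ((F1, F0), (F3, F0), (F3, F0)), ((F1, F0), (F3, F0), (F3, F2)),
     ((F1, F0), (F3, F1), (F0, F0)), ((F1, F0), (F3, F1), (F0, F1)), ((F1, F0), (F3, F1), (F0, F3)),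
     ((F1, F0), (F3, F1), (F1, F1)), ((F1, F0), (F3, F1), (F1, F2))],
    [((F1, F0), (F3, F1), (F1, F3)), ((F1, F0), (F3, F1), (F2, F0)), ((F1, F0), (F3, F1), (F2, F1)),
     ((F1, F0), (F3, F1), (F2, F2)), ((F1, F0), (F3, F1), (F2, F3)), ((F1, F0), (F3, F1), (F3, F1)),
     ((F1, F0), (F3, F2), (F1, F0)), ((F1, F0), (F3, F2), (F1, F1)), ((F1, F0), (F3, F2), (F1, F2)),
     ((F1, F0), (F3, F2), (F1, F3)), ((F1, F0), (F3, F2), (F2, F0)), ((F1, F0), (F3, F2), (F3, F0)),
     ((F1, F0), (F3, F2), (F3, F1)), ((F1, F0), (F3, F2), (F3, F2))],
    [((F1, F0), (F3, F2), (F3, F3)), ((F1, F0), (F3, F3), (F0, F2)), ((F1, F0), (F3, F3), (F1, F0)),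
     ((F1, F0), (F3, F3), (F1, F2)), ((F1, F0), (F3, F3), (F2, F0)), ((F1, F0), (F3, F3), (F2, F2)),
     ((F1, F0), (F3, F3), (F3, F1)), ((F1, F0), (F3, F3), (F3, F2)), ((F2, F0), (F0, F2), (F1, F0)),
     ((F2, F0), (F1, F0), (F0, F1)), ((F2, F0), (F1, F0), (F1, F0)), ((F2, F0), (F1, F0), (F1, F1)),
     ((F2, F0), (F1, F0), (F1, F2)), ((F2, F0), (F1, F0), (F1, F3))],
    [((F2, F0), (F1, F0), (F2, F0)), ((F2, F0), (F1, F0), (F2, F1)), ((F2, F0), (F1, F0), (F2, F2)),
     ((F2, F0), (F1, F0), (F2, F3)), ((F2, F0), (F1, F0), (F3, F2)), ((F2, F0), (F1, F0), (F3, F3)),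
     ((F2, F0), (F2, F2), (F1, F0)), ((F2, F2), (F0, F0), (F1, F0)), ((F2, F2), (F1, F0), (F0, F1)),
     ((F2, F2), (F1, F0), (F0, F2)), ((F2, F2), (F1, F0), (F0, F3)), ((F2, F2), (F1, F0), (F1, F2)),
     ((F2, F2), (F1, F0), (F1, F3)), ((F2, F2), (F1, F0), (F2, F0))],
    [((F2, F2), (F1, F0), (F2, F3)), ((F2, F2), (F1, F0), (F3, F1)), ((F2, F2), (F1, F0), (F3, F2)),
     ((F2, F2), (F1, F0), (F3, F3)), ((F2, F2), (F2, F0), (F1, F0))]]"

definition S4_points :: "(four \<times> four) vec3 list list" where
  "S4_points = [
    [((F0, F0), (F0, F0), (F1, F0)), ((F0, F0), (F0, F1), (F1, F0)), ((F0, F0), (F0, F2), (F1, F0)),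
     ((F0, F0), (F1, F0), (F0, F0)), ((F0, F0), (F1, F0), (F0, F1)), ((F0, F0), (F1, F0), (F0, F3)),
     ((F0, F0), (F1, F0), (F1, F1)), ((F0, F0), (F1, F0), (F1, F3)), ((F0, F0), (F1, F0), (F2, F0)),
     ((F0, F0), (F1, F0), (F2, F1)), ((F0, F0), (F1, F0), (F3, F0)), ((F0, F0), (F1, F0), (F3, F1)),
     ((F0, F0), (F1, F0), (F3, F3)), ((F0, F1), (F0, F0), (F1, F0))],
    [((F0, F1), (F0, F1), (F1, F0)), ((F0, F1), (F0, F3), (F1, F0)), ((F0, F1), (F1, F0), (F0, F1)),
     ((F0, F1), (F1, F0), (F0, F2)), ((F0, F1), (F1, F0), (F0, F3)), ((F0, F1), (F1, F0), (F1, F0)),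
     ((F0, F1), (F1, F0), (F1, F2)), ((F0, F1), (F1, F0), (F2, F2)), ((F0, F1), (F1, F0), (F2, F3)),
     ((F0, F1), (F1, F0), (F3, F0)), ((F0, F1), (F1, F0), (F3, F1)), ((F0, F1), (F1, F0), (F3, F3)),
     ((F0, F2), (F0, F0), (F1, F0)), ((F0, F2), (F0, F2), (F1, F0))],
    [((F0, F2), (F0, F3), (F1, F0)), ((F0, F2), (F1, F0), (F0, F0)), ((F0, F2), (F1, F0), (F0, F2)),
     ((F0, F2), (F1, F0), (F0, F3)), ((F0, F2), (F1, F0), (F1, F0)), ((F0, F2), (F1, F0), (F1, F1)),
     ((F0, F2), (F1, F0), (F2, F2)), ((F0, F2), (F1, F0), (F2, F3)), ((F0, F2), (F1, F0), (F3, F0)),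
     ((F0, F2), (F1, F0), (F3, F1)), ((F0, F2), (F1, F0), (F3, F3)), ((F0, F3), (F0, F1), (F1, F0)),
     ((F0, F3), (F0, F2), (F1, F0)), ((F0, F3), (F0, F3), (F1, F0))],
    [((F0, F3), (F1, F0), (F0, F0)), ((F0, F3), (F1, F0), (F0, F1)), ((F0, F3), (F1, F0), (F0, F2)),
     ((F0, F3), (F1, F0), (F1, F2)), ((F0, F3), (F1, F0), (F1, F3)), ((F0, F3), (F1, F0), (F2, F0)),
     ((F0, F3), (F1, F0), (F2, F1)), ((F0, F3), (F1, F0), (F3, F0)), ((F0, F3), (F1, F0), (F3, F1)),
     ((F0, F3), (F1, F0), (F3, F3)), ((F1, F0), (F0, F0), (F0, F0)), ((F1, F0), (F0, F0), (F0, F1)),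
     ((F1, F0), (F0, F0), (F1, F0)), ((F1, F0), (F0, F0), (F1, F1))],
    [((F1, F0), (F0, F0), (F1, F2)), ((F1, F0), (F0, F0), (F2, F2)), ((F1, F0), (F0, F0), (F2, F3)),
     ((F1, F0), (F0, F0), (F3, F0)), ((F1, F0), (F0, F0), (F3, F1)), ((F1, F0), (F0, F0), (F3, F3)),
     ((F1, F0), (F0, F1), (F0, F2)), ((F1, F0), (F0, F1), (F0, F3)), ((F1, F0), (F0, F1), (F1, F0)),
     ((F1, F0), (F0, F1), (F1, F1)), ((F1, F0), (F0, F1), (F1, F3)), ((F1, F0), (F0, F1), (F2, F2)),
     ((F1, F0), (F0, F1), (F2, F3)), ((F1, F0), (F0, F1), (F3, F0))],
    [((F1, F0), (F0, F1), (F3, F1)), ((F1, F0), (F0, F1), (F3, F2)), ((F1, F0), (F0, F2), (F0, F2)),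
     ((F1, F0), (F0, F2), (F0, F3)), ((F1, F0), (F0, F2), (F1, F0)), ((F1, F0), (F0, F2), (F1, F2)),
     ((F1, F0), (F0, F2), (F1, F3)), ((F1, F0), (F0, F2), (F2, F0)), ((F1, F0), (F0, F2), (F2, F2)),
     ((F1, F0), (F0, F2), (F3, F1)), ((F1, F0), (F0, F2), (F3, F2)), ((F1, F0), (F0, F2), (F3, F3)),
     ((F1, F0), (F0, F3), (F0, F0)), ((F1, F0), (F0, F3), (F0, F1))],
    [((F1, F0), (F0, F3), (F1, F1)), ((F1, F0), (F0, F3), (F1, F2)), ((F1, F0), (F0, F3), (F1, F3)),
     ((F1, F0), (F0, F3), (F2, F0)), ((F1, F0), (F0, F3), (F2, F2)), ((F1, F0), (F0, F3), (F3, F0)),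
     ((F1, F0), (F0, F3), (F3, F2)), ((F1, F0), (F0, F3), (F3, F3)), ((F1, F0), (F1, F0), (F0, F0)),
     ((F1, F0), (F1, F0), (F0, F3)), ((F1, F0), (F1, F0), (F3, F1)), ((F1, F0), (F1, F0), (F3, F2)),
     ((F1, F0), (F1, F0), (F3, F3)), ((F1, F0), (F1, F1), (F0, F1))],
    [((F1, F0), (F1, F1), (F0, F2)), ((F1, F0), (F1, F1), (F1, F0)), ((F1, F0), (F1, F1), (F1, F1)),
     ((F1, F0), (F1, F1), (F1, F2)), ((F1, F0), (F1, F1), (F1, F3)), ((F1, F0), (F1, F1), (F2, F0)),
     ((F1, F0), (F1, F1), (F2, F2)), ((F1, F0), (F1, F1), (F3, F2)), ((F1, F0), (F1, F2), (F0, F0)),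
     ((F1, F0), (F1, F2), (F0, F1)), ((F1, F0), (F1, F2), (F0, F2)), ((F1, F0), (F1, F2), (F0, F3)),
     ((F1, F0), (F1, F2), (F1, F0)), ((F1, F0), (F1, F2), (F1, F1))],
    [((F1, F0), (F1, F2), (F1, F2)), ((F1, F0), (F1, F2), (F1, F3)), ((F1, F0), (F1, F2), (F3, F0)),
     ((F1, F0), (F1, F3), (F1, F0)), ((F1, F0), (F1, F3), (F1, F1)), ((F1, F0), (F1, F3), (F1, F2)),
     ((F1, F0), (F1, F3), (F1, F3)), ((F1, F0), (F1, F3), (F2, F0)), ((F1, F0), (F1, F3), (F2, F2)),
     ((F1, F0), (F1, F3), (F3, F0)), ((F1, F0), (F1, F3), (F3, F1)), ((F1, F0), (F1, F3), (F3, F3)),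
     ((F1, F0), (F2, F0), (F0, F0)), ((F1, F0), (F2, F0), (F0, F1))],
    [((F1, F0), (F2, F0), (F0, F3)), ((F1, F0), (F2, F0), (F1, F0)), ((F1, F0), (F2, F0), (F1, F2)),
     ((F1, F0), (F2, F0), (F2, F0)), ((F1, F0), (F2, F0), (F2, F1)), ((F1, F0), (F2, F0), (F2, F3)),
     ((F1, F0), (F2, F0), (F3, F0)), ((F1, F0), (F2, F0), (F3, F2)), ((F1, F0), (F2, F1), (F0, F0)),
     ((F1, F0), (F2, F1), (F0, F1)), ((F1, F0), (F2, F1), (F0, F2)), ((F1, F0), (F2, F1), (F1, F0)),
     ((F1, F0), (F2, F1), (F1, F3)), ((F1, F0), (F2, F1), (F2, F0))],
    [((F1, F0), (F2, F1), (F2, F1)), ((F1, F0), (F2, F1), (F2, F3)), ((F1, F0), (F2, F1), (F3, F0)),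
     ((F1, F0), (F2, F1), (F3, F2)), ((F1, F0), (F2, F2), (F0, F1)), ((F1, F0), (F2, F2), (F0, F2)),
     ((F1, F0), (F2, F2), (F0, F3)), ((F1, F0), (F2, F2), (F1, F1)), ((F1, F0), (F2, F2), (F1, F2)),
     ((F1, F0), (F2, F2), (F2, F0)), ((F1, F0), (F2, F2), (F2, F1)), ((F1, F0), (F2, F2), (F2, F3)),
     ((F1, F0), (F2, F2), (F3, F1)), ((F1, F0), (F2, F2), (F3, F3))],
    [((F1, F0), (F2, F3), (F0, F0)), ((F1, F0), (F2, F3), (F0, F2)), ((F1, F0), (F2, F3), (F0, F3)),
     ((F1, F0), (F2, F3), (F1, F1)), ((F1, F0), (F2, F3), (F1, F3)), ((F1, F0), (F2, F3), (F2, F0)),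
     ((F1, F0), (F2, F3), (F2, F1)), ((F1, F0), (F2, F3), (F2, F3)), ((F1, F0), (F2, F3), (F3, F1)),
     ((F1, F0), (F2, F3), (F3, F3)), ((F1, F0), (F3, F0), (F0, F0)), ((F1, F0), (F3, F0), (F0, F1)),
     ((F1, F0), (F3, F0), (F0, F2)), ((F1, F0), (F3, F0), (F1, F1))],
    [((F1, F0), (F3, F0), (F1, F2)), ((F1, F0), (F3, F0), (F2, F2)), ((F1, F0), (F3, F0), (F2, F3)),
     ((F1, F0), (F3, F1), (F0, F0)), ((F1, F0), (F3, F1), (F0, F1)), ((F1, F0), (F3, F1), (F0, F3)),
     ((F1, F0), (F3, F1), (F1, F0)), ((F1, F0), (F3, F1), (F1, F3)), ((F1, F0), (F3, F1), (F2, F1)),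
     ((F1, F0), (F3, F1), (F2, F2)), ((F1, F0), (F3, F1), (F3, F0)), ((F1, F0), (F3, F1), (F3, F1)),
     ((F1, F0), (F3, F1), (F3, F2)), ((F1, F0), (F3, F2), (F0, F0))],
    [((F1, F0), (F3, F2), (F0, F2)), ((F1, F0), (F3, F2), (F0, F3)), ((F1, F0), (F3, F2), (F1, F1)),
     ((F1, F0), (F3, F2), (F1, F2)), ((F1, F0), (F3, F2), (F2, F2)), ((F1, F0), (F3, F2), (F2, F3)),
     ((F1, F0), (F3, F2), (F3, F1)), ((F1, F0), (F3, F2), (F3, F2)), ((F1, F0), (F3, F2), (F3, F3)),
     ((F1, F0), (F3, F3), (F0, F1)), ((F1, F0), (F3, F3), (F0, F2)), ((F1, F0), (F3, F3), (F0, F3)),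
     ((F1, F0), (F3, F3), (F1, F0)), ((F1, F0), (F3, F3), (F1, F3))],
    [((F1, F0), (F3, F3), (F2, F0)), ((F1, F0), (F3, F3), (F2, F3)), ((F1, F0), (F3, F3), (F3, F1)),
     ((F1, F0), (F3, F3), (F3, F2)), ((F1, F0), (F3, F3), (F3, F3))]]"

definition T4_points :: "(four \<times> four) vec3 list list" where
  "T4_points = [
    [((F0, F0), (F0, F1), (F1, F0)), ((F0, F0), (F0, F2), (F1, F0)), ((F0, F0), (F1, F0), (F0, F0)),
     ((F0, F0), (F1, F0), (F0, F1)), ((F0, F0), (F1, F0), (F0, F3)), ((F0, F0), (F1, F0), (F1, F0)),
     ((F0, F0), (F1, F0), (F1, F2)), ((F0, F0), (F1, F0), (F1, F3)), ((F0, F0), (F1, F0), (F2, F0)),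
     ((F0, F0), (F1, F0), (F2, F1)), ((F0, F0), (F1, F0), (F2, F2)), ((F0, F0), (F1, F0), (F3, F0)),
     ((F0, F0), (F1, F0), (F3, F1)), ((F0, F1), (F0, F0), (F1, F0))],
    [((F0, F1), (F0, F3), (F1, F0)), ((F0, F1), (F1, F0), (F0, F1)), ((F0, F1), (F1, F0), (F0, F3)),
     ((F0, F1), (F1, F0), (F1, F2)), ((F0, F1), (F1, F0), (F1, F3)), ((F0, F1), (F1, F0), (F2, F3)),
     ((F0, F1), (F1, F0), (F3, F0)), ((F0, F1), (F1, F0), (F3, F2)), ((F0, F2), (F0, F0), (F1, F0)),
     ((F0, F2), (F0, F1), (F1, F0)), ((F0, F2), (F0, F2), (F1, F0)), ((F0, F2), (F1, F0), (F0, F0)),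
     ((F0, F2), (F1, F0), (F0, F2)), ((F0, F2), (F1, F0), (F1, F0))],
    [((F0, F2), (F1, F0), (F1, F2)), ((F0, F2), (F1, F0), (F1, F3)), ((F0, F2), (F1, F0), (F2, F0)),
     ((F0, F2), (F1, F0), (F2, F2)), ((F0, F2), (F1, F0), (F2, F3)), ((F0, F2), (F1, F0), (F3, F0)),
     ((F0, F2), (F1, F0), (F3, F1)), ((F0, F2), (F1, F0), (F3, F2)), ((F0, F3), (F0, F0), (F1, F0)),
     ((F0, F3), (F0, F2), (F1, F0)), ((F0, F3), (F0, F3), (F1, F0)), ((F0, F3), (F1, F0), (F0, F0)),
     ((F0, F3), (F1, F0), (F0, F1)), ((F0, F3), (F1, F0), (F0, F2))],
    [((F0, F3), (F1, F0), (F1, F0)), ((F0, F3), (F1, F0), (F1, F3)), ((F0, F3), (F1, F0), (F2, F1)),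
     ((F0, F3), (F1, F0), (F2, F2)), ((F0, F3), (F1, F0), (F2, F3)), ((F0, F3), (F1, F0), (F3, F1)),
     ((F0, F3), (F1, F0), (F3, F2)), ((F0, F3), (F1, F0), (F3, F3)), ((F1, F0), (F0, F0), (F0, F1)),
     ((F1, F0), (F0, F0), (F0, F2)), ((F1, F0), (F0, F0), (F0, F3)), ((F1, F0), (F0, F0), (F1, F0)),
     ((F1, F0), (F0, F0), (F1, F2)), ((F1, F0), (F0, F0), (F2, F0))],
    [((F1, F0), (F0, F0), (F2, F1)), ((F1, F0), (F0, F0), (F2, F3)), ((F1, F0), (F0, F0), (F3, F1)),
     ((F1, F0), (F0, F0), (F3, F3)), ((F1, F0), (F0, F1), (F0, F1)), ((F1, F0), (F0, F1), (F0, F2)),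
     ((F1, F0), (F0, F1), (F0, F3)), ((F1, F0), (F0, F1), (F1, F0)), ((F1, F0), (F0, F1), (F1, F1)),
     ((F1, F0), (F0, F1), (F1, F2)), ((F1, F0), (F0, F1), (F2, F1)), ((F1, F0), (F0, F1), (F3, F0)),
     ((F1, F0), (F0, F1), (F3, F1)), ((F1, F0), (F0, F1), (F3, F2))],
    [((F1, F0), (F0, F2), (F0, F0)), ((F1, F0), (F0, F2), (F0, F1)), ((F1, F0), (F0, F2), (F1, F0)),
     ((F1, F0), (F0, F2), (F1, F1)), ((F1, F0), (F0, F2), (F1, F3)), ((F1, F0), (F0, F2), (F2, F1)),
     ((F1, F0), (F0, F2), (F2, F2)), ((F1, F0), (F0, F2), (F2, F3)), ((F1, F0), (F0, F2), (F3, F2)),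
     ((F1, F0), (F0, F2), (F3, F3)), ((F1, F0), (F0, F3), (F0, F0)), ((F1, F0), (F0, F3), (F0, F1)),
     ((F1, F0), (F0, F3), (F1, F1)), ((F1, F0), (F0, F3), (F1, F2))],
    [((F1, F0), (F0, F3), (F2, F1)), ((F1, F0), (F0, F3), (F2, F2)), ((F1, F0), (F0, F3), (F2, F3)),
     ((F1, F0), (F0, F3), (F3, F0)), ((F1, F0), (F0, F3), (F3, F1)), ((F1, F0), (F0, F3), (F3, F3)),
     ((F1, F0), (F1, F0), (F0, F0)), ((F1, F0), (F1, F0), (F0, F1)), ((F1, F0), (F1, F0), (F0, F3)),
     ((F1, F0), (F1, F0), (F1, F2)), ((F1, F0), (F1, F0), (F1, F3)), ((F1, F0), (F1, F0), (F2, F0)),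
     ((F1, F0), (F1, F0), (F2, F1)), ((F1, F0), (F1, F0), (F2, F3))],
    [((F1, F0), (F1, F0), (F3, F0)), ((F1, F0), (F1, F0), (F3, F1)), ((F1, F0), (F1, F0), (F3, F3)),
     ((F1, F0), (F1, F1), (F0, F2)), ((F1, F0), (F1, F1), (F0, F3)), ((F1, F0), (F1, F1), (F1, F1)),
     ((F1, F0), (F1, F1), (F1, F3)), ((F1, F0), (F1, F1), (F2, F1)), ((F1, F0), (F1, F1), (F3, F1)),
     ((F1, F0), (F1, F1), (F3, F2)), ((F1, F0), (F1, F2), (F0, F0)), ((F1, F0), (F1, F2), (F0, F1)),
     ((F1, F0), (F1, F2), (F0, F2)), ((F1, F0), (F1, F2), (F1, F0))],
    [((F1, F0), (F1, F2), (F1, F1)), ((F1, F0), (F1, F2), (F1, F2)), ((F1, F0), (F1, F2), (F2, F0)),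
     ((F1, F0), (F1, F2), (F2, F1)), ((F1, F0), (F1, F2), (F2, F3)), ((F1, F0), (F1, F2), (F3, F0)),
     ((F1, F0), (F1, F2), (F3, F3)), ((F1, F0), (F1, F3), (F0, F2)), ((F1, F0), (F1, F3), (F0, F3)),
     ((F1, F0), (F1, F3), (F1, F0)), ((F1, F0), (F1, F3), (F1, F1)), ((F1, F0), (F1, F3), (F1, F3)),
     ((F1, F0), (F1, F3), (F2, F0)), ((F1, F0), (F1, F3), (F2, F1))],
    [((F1, F0), (F1, F3), (F2, F3)), ((F1, F0), (F1, F3), (F3, F0)), ((F1, F0), (F1, F3), (F3, F1)),
     ((F1, F0), (F1, F3), (F3, F2)), ((F1, F0), (F2, F0), (F0, F0)), ((F1, F0), (F2, F0), (F0, F2)),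
     ((F1, F0), (F2, F0), (F1, F0)), ((F1, F0), (F2, F0), (F1, F1)), ((F1, F0), (F2, F0), (F1, F2)),
     ((F1, F0), (F2, F0), (F1, F3)), ((F1, F0), (F2, F0), (F2, F0)), ((F1, F0), (F2, F0), (F2, F2)),
     ((F1, F0), (F2, F0), (F3, F0)), ((F1, F0), (F2, F0), (F3, F1))],
    [((F1, F0), (F2, F0), (F3, F2)), ((F1, F0), (F2, F0), (F3, F3)), ((F1, F0), (F2, F1), (F0, F0)),
     ((F1, F0), (F2, F1), (F0, F1)), ((F1, F0), (F2, F1), (F0, F2)), ((F1, F0), (F2, F1), (F1, F0)),
     ((F1, F0), (F2, F1), (F1, F2)), ((F1, F0), (F2, F1), (F1, F3)), ((F1, F0), (F2, F1), (F2, F0)),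
     ((F1, F0), (F2, F1), (F2, F3)), ((F1, F0), (F2, F1), (F3, F0)), ((F1, F0), (F2, F1), (F3, F2)),
     ((F1, F0), (F2, F1), (F3, F3)), ((F1, F0), (F2, F2), (F0, F2))],
    [((F1, F0), (F2, F2), (F1, F1)), ((F1, F0), (F2, F2), (F1, F2)), ((F1, F0), (F2, F2), (F1, F3)),
     ((F1, F0), (F2, F2), (F2, F2)), ((F1, F0), (F2, F2), (F3, F0)), ((F1, F0), (F2, F2), (F3, F2)),
     ((F1, F0), (F2, F2), (F3, F3)), ((F1, F0), (F3, F0), (F0, F0)), ((F1, F0), (F3, F0), (F0, F1)),
     ((F1, F0), (F3, F0), (F0, F2)), ((F1, F0), (F3, F0), (F1, F0)), ((F1, F0), (F3, F0), (F1, F1)),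
     ((F1, F0), (F3, F0), (F1, F3)), ((F1, F0), (F3, F0), (F2, F0))],
    [((F1, F0), (F3, F0), (F3, F0)), ((F1, F0), (F3, F0), (F3, F1)), ((F1, F0), (F3, F0), (F3, F3)),
     ((F1, F0), (F3, F1), (F0, F0)), ((F1, F0), (F3, F1), (F0, F1)), ((F1, F0), (F3, F1), (F1, F2)),
     ((F1, F0), (F3, F1), (F1, F3)), ((F1, F0), (F3, F1), (F2, F0)), ((F1, F0), (F3, F1), (F2, F1)),
     ((F1, F0), (F3, F1), (F2, F2)), ((F1, F0), (F3, F1), (F3, F0)), ((F1, F0), (F3, F1), (F3, F1)),
     ((F1, F0), (F3, F1), (F3, F2)), ((F1, F0), (F3, F2), (F0, F0))],
    [((F1, F0), (F3, F2), (F0, F1)), ((F1, F0), (F3, F2), (F1, F0)), ((F1, F0), (F3, F2), (F1, F1)),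
     ((F1, F0), (F3, F2), (F1, F3)), ((F1, F0), (F3, F2), (F2, F0)), ((F1, F0), (F3, F2), (F2, F1)),
     ((F1, F0), (F3, F2), (F2, F2)), ((F1, F0), (F3, F2), (F3, F1)), ((F1, F0), (F3, F2), (F3, F2)),
     ((F1, F0), (F3, F3), (F0, F0)), ((F1, F0), (F3, F3), (F0, F2)), ((F1, F0), (F3, F3), (F0, F3)),
     ((F1, F0), (F3, F3), (F1, F0)), ((F1, F0), (F3, F3), (F1, F2))],
    [((F1, F0), (F3, F3), (F2, F0)), ((F1, F0), (F3, F3), (F2, F1)), ((F1, F0), (F3, F3), (F2, F2)),
     ((F1, F0), (F3, F3), (F3, F2)), ((F1, F0), (F3, F3), (F3, F3))]]"

lemma G4_arc: "\<exists>A. projective_arc G4 A 201 13"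
  by (rule ring_model.exists_projective_arc[OF ring_model_G4, where t = "(F2, F0)" and pss = G4_points])
    code_simp+

lemma S4_arc: "\<exists>A. projective_arc S4 A 201 13"
  by (rule ring_model.exists_projective_arc[OF ring_model_S4, where t = "(F0, F1)" and pss = S4_points])
    code_simp+

lemma T4_arc: "\<exists>A. projective_arc T4 A 201 13"
  by (rule ring_model.exists_projective_arc[OF ring_model_T4, where t = "(F0, F1)" and pss = T4_points])
    code_simp+

theorem theorem3p8:
  shows "\<forall>R \<in> {G4, S4, T4}. \<exists>A. projective_arc R A 201 13"
  using G4_arc S4_arc T4_arc by blast

end
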